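(* Let $(c_{n,i})_{n,i\ge 0}$ be the integers defined by $c_{0,1}=1$, $c_{0,i}=0$ for $i\ne 1$, and for $n\ge 0$, $i\ge 0$, \[c_{n+1,i}=\sum_{j=i}^{n+1}\binom{j}{i}c_{n,j}+\sum_{j=0}^{i}\sum_{k=0}^{n}c_{k,j}\,c_{n-k,i-j}.\] Let $(P_n)_{n\ge0}$ be the polynomials defined by $P_0(m)=m$ and $P_{n+1}(m)=P_n(m+1)+\sum_{i=0}^{n}P_i(m)P_{n-i}(m)$. Then $c_{n,i}=0$ whenever $i>n+1$, and for every $n\ge 0$, \[P_n(m)=\sum_{i=0}^{n+1}c_{n,i}\,m^i .\] In particular, the number $T_{n,m}$ of lambda terms (with de Bruijn indices) of size $n$ with at most $m$ distinct free indices equals $\sum_{i=0}^{n+1}c_{n,i}m^i$.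
   Context: Lambda terms are written with de Bruijn indices $\underline{1},\underline{2},\dots$; the size is $|\underline{k}|=0$, $|\lambda t|=|t|+1$, $|t\,s|=|t|+|s|+1$. $T_{n,m}$ is the number of terms of size $n$ all of whose free indices lie in $\{\underline 1,\dots,\underline m\}$; it satisfies $T_{0,m}=m$ and $T_{n+1,m}=T_{n,m+1}+\sum_{i=0}^{n}T_{i,m}T_{n-i,m}$, so $T_{n,m}=P_n(m)$. Combinatorially, $c_{n,i}$ counts $i$-contexts of size $n$: closed terms containing exactly $i$ holes (each hole a leaf of size $0$ occurring once, holes numbered left to right). *)

theory Defs
  imports Main
begin

function c :: "nat \<Rightarrow> nat \<Rightarrow> int" where
  "c 0 i = (if i = 1 then 1 else 0)"
| "c (Suc n) i =
     (\<Sum>j=i..Suc n. of_nat (j choose i) * c n j)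
   + (\<Sum>j=0..i. \<Sum>k=0..n. c k j * c (n - k) (i - j))"
  by pat_completeness auto
termination
  by (relation "measure fst") auto

function P :: "nat \<Rightarrow> int \<Rightarrow> int" where
  "P 0 m = m"
| "P (Suc n) m = P n (m + 1) + (\<Sum>i=0..n. P i m * P (n - i) m)"
  by pat_completeness auto
termination
  by (relation "measure fst") auto

end

theory Submission
  imports Defs "HOL-Computational_Algebra.Polynomial"
begin

text \<open>Let Q_n be the polynomial with coefficients c(n,i). The recurrence for c is the
  coefficientwise form of the recurrence for P: its first sum is the coefficient of m^i in
  Q_n(m + 1) by the binomial theorem, its second that of the Cauchy product
  sum_k Q_k(m) Q_(n-k)(m). So the Q_n satisfy the recurrence defining P_n, and P_n = Q_n by
  induction. The degree bound deg Q_n <= n + 1, i.e. c(n,i) = 0 for i > n + 1, holds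
  because the shift preserves degrees and each product Q_k Q_(n-k) has degree at most n + 2.\<close>

lemma c_eq_0_above:
  assumes "i > n + 1"
  shows "c n i = 0"
  using assms
proof (induction n arbitrary: i rule: less_induct)
  case (less n)
  show ?case
  proof (cases n)
    case 0
    with less.prems show ?thesis by simp
  next
    case (Suc n')
    have shift_part: "(\<Sum>j=i..Suc n'. of_nat (j choose i) * c n' j) = 0"
      using less.prems Suc by simp
    have "c k j * c (n' - k) (i - j) = 0" if "j \<le> i" "k \<le> n'" for j k
    proof (cases "j > k + 1")
      case True
      then show ?thesis using less.IH[of k j] Suc that by simp
    next
      case False
      then have "i - j > n' - k + 1" using less.prems Suc that by auto
      then show ?thesis using less.IH[of "n' - k" "i - j"] Suc that by simp
    qed
    then have "(\<Sum>j=0..i. \<Sum>k=0..n'. c k j * c (n' - k) (i - j)) = 0"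
      by (intro sum.neutral ballI) simp
    with shift_part show ?thesis by (simp add: Suc)
  qed
qed

lemma pcompose_monom: "pcompose (monom a j) q = smult a (q ^ j)"
  for q :: "'a::comm_semiring_1 poly"
  by (induction j) (simp_all add: monom_altdef pcompose_smult pcompose_mult pcompose_pCons)

lemma coeff_one_plus_X_power: "coeff ([:1, 1:] ^ j) i = (of_nat (j choose i) :: 'a::comm_semiring_1)"
proof (cases "i \<le> j")
  case True
  then show ?thesis by (simp add: coeff_linear_poly_power)
next
  case False
  then have "degree ([:1, 1:] ^ j :: 'a poly) < i"
    using degree_power_le[of "[:1, 1:] :: 'a poly" j] by simp
  with False show ?thesis by (simp add: coeff_eq_0 binomial_eq_0)
qed

lemma coeff_pcompose_shift:
  fixes p :: "'a::comm_semiring_1 poly"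
  assumes "degree p \<le> N"
  shows "coeff (pcompose p [:1, 1:]) i = (\<Sum>j=i..N. of_nat (j choose i) * coeff p j)"
proof -
  have "pcompose p [:1, 1:] = (\<Sum>j\<le>N. smult (coeff p j) ([:1, 1:] ^ j))"
    by (subst (1) poly_as_sum_of_monoms'[OF assms, symmetric])
       (simp add: pcompose_sum pcompose_monom)
  then have "coeff (pcompose p [:1, 1:]) i = (\<Sum>j\<le>N. of_nat (j choose i) * coeff p j)"
    by (simp add: coeff_sum coeff_one_plus_X_power mult.commute)
  also have "\<dots> = (\<Sum>j=i..N. of_nat (j choose i) * coeff p j)"
    by (rule sum.mono_neutral_right) (auto simp: binomial_eq_0)
  finally show ?thesis .
qed

definition c_poly :: "nat \<Rightarrow> int poly" where
  "c_poly n = (\<Sum>i\<le>n + 1. monom (c n i) i)"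

lemma coeff_c_poly: "coeff (c_poly n) i = c n i"
  unfolding c_poly_def coeff_sum using c_eq_0_above[of n i] by (auto simp: not_le)

lemma degree_c_poly: "degree (c_poly n) \<le> n + 1"
  unfolding c_poly_def by (intro degree_sum_le) (auto intro: order.trans[OF degree_monom_le])

lemma poly_c_poly: "poly (c_poly n) m = (\<Sum>i=0..n + 1. c n i * m ^ i)"
  by (simp add: c_poly_def poly_sum poly_monom atLeast0AtMost)

lemma c_poly_Suc:
  "c_poly (Suc n) = pcompose (c_poly n) [:1, 1:] + (\<Sum>k=0..n. c_poly k * c_poly (n - k))"
proof (rule poly_eqI)
  fix i
  have "coeff (\<Sum>k=0..n. c_poly k * c_poly (n - k)) i
      = (\<Sum>k=0..n. \<Sum>j=0..i. c k j * c (n - k) (i - j))"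
    by (simp add: coeff_sum coeff_mult coeff_c_poly atLeast0AtMost)
  also have "\<dots> = (\<Sum>j=0..i. \<Sum>k=0..n. c k j * c (n - k) (i - j))"
    by (rule sum.swap)
  finally show "coeff (c_poly (Suc n)) i
      = coeff (pcompose (c_poly n) [:1, 1:] + (\<Sum>k=0..n. c_poly k * c_poly (n - k))) i"
    using degree_c_poly[of n]
    by (simp add: coeff_pcompose_shift[where N = "Suc n"] coeff_c_poly)
qed

lemma P_eq_poly_c_poly: "P n m = poly (c_poly n) m"
proof (induction n m rule: P.induct)
  case (1 m)
  then show ?case by (simp add: poly_c_poly)
next
  case (2 n m)
  then show ?case by (simp add: c_poly_Suc poly_pcompose poly_sum add.commute)
qed

theorem mainTheorem3:
  shows "(\<forall>n i. i > n + 1 \<longrightarrow> c n i = 0)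
       \<and> (\<forall>n (m::int). P n m = (\<Sum>i=0..n+1. c n i * m ^ i))"
  using c_eq_0_above P_eq_poly_c_poly poly_c_poly by auto

end
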